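(* Let $G$ be a finite connected graph in which every induced cycle is a square (an induced $4$-cycle) and in which the two-squares graph does not embed. Then $G$ is $\mathcal{C}$-$\mathrm{HH}$.
   Context: Graphs are simple; subgraphs are induced; "embeds" means is isomorphic to an induced subgraph. A homomorphism maps edges to edges. A graph $G$ is $\mathcal{C}$-$\mathrm{HH}$ if every homomorphism from a finite connected induced subgraph of $G$ into $G$ extends to a homomorphism $G\to G$. The two-squares graph is the $6$-cycle $v_1\dots v_6v_1$ with the single chord $v_3v_6$. *)

theory Defs
  imports Main
begin

definition simple_graph :: "'a set \<Rightarrow> ('a \<Rightarrow> 'a \<Rightarrow> bool) \<Rightarrow> bool" where
  "simple_graph V E \<longleftrightarrow>
     (\<forall>x y. E x y \<longrightarrow> x \<in> V \<and> y \<in> V) \<and>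
     (\<forall>x y. E x y \<longrightarrow> E y x) \<and>
     (\<forall>x. \<not> E x x)"

definition connected_on :: "('a \<Rightarrow> 'a \<Rightarrow> bool) \<Rightarrow> 'a set \<Rightarrow> bool" where
  "connected_on E S \<longleftrightarrow> S \<noteq> {} \<and>
     (\<forall>x\<in>S. \<forall>y\<in>S. (\<lambda>u v. u \<in> S \<and> v \<in> S \<and> E u v)\<^sup>*\<^sup>* x y)"

definition graph_hom :: "'a set \<Rightarrow> ('a \<Rightarrow> 'a \<Rightarrow> bool) \<Rightarrow> 'b set \<Rightarrow> ('b \<Rightarrow> 'b \<Rightarrow> bool)
    \<Rightarrow> ('a \<Rightarrow> 'b) \<Rightarrow> bool" where
  "graph_hom S E W F f \<longleftrightarrow>
     (\<forall>x\<in>S. f x \<in> W) \<and> (\<forall>x\<in>S. \<forall>y\<in>S. E x y \<longrightarrow> F (f x) (f y))"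

definition induced_cycle :: "'a set \<Rightarrow> ('a \<Rightarrow> 'a \<Rightarrow> bool) \<Rightarrow> 'a list \<Rightarrow> bool" where
  "induced_cycle V E vs \<longleftrightarrow>
     length vs \<ge> 3 \<and> distinct vs \<and> set vs \<subseteq> V \<and>
     (\<forall>i<length vs. \<forall>j<length vs.
        E (vs ! i) (vs ! j) \<longleftrightarrow>
          (j = Suc i mod length vs \<or> i = Suc j mod length vs))"

definition two_squares_edge :: "nat \<Rightarrow> nat \<Rightarrow> bool" where
  "two_squares_edge i j \<longleftrightarrow>
     {i, j} \<in> {{1,2},{2,3},{3,4},{4,5},{5,6},{6,1},{3,6}}"

definition embeds :: "'b set \<Rightarrow> ('b \<Rightarrow> 'b \<Rightarrow> bool) \<Rightarrow> 'a set \<Rightarrow> ('a \<Rightarrow> 'a \<Rightarrow> bool) \<Rightarrow> bool" where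
  "embeds W F V E \<longleftrightarrow>
     (\<exists>g. inj_on g W \<and> g ` W \<subseteq> V \<and>
          (\<forall>x\<in>W. \<forall>y\<in>W. E (g x) (g y) \<longleftrightarrow> F x y))"

definition C_HH :: "'a set \<Rightarrow> ('a \<Rightarrow> 'a \<Rightarrow> bool) \<Rightarrow> bool" where
  "C_HH V E \<longleftrightarrow>
     (\<forall>S f. S \<subseteq> V \<and> finite S \<and> connected_on E S \<and> graph_hom S E V E f \<longrightarrow>
        (\<exists>h. graph_hom V E V E h \<and> (\<forall>x\<in>S. h x = f x)))"

end

theory Submission
  imports Defs
begin

text \<open>The homomorphism is extended one vertex at a time, keeping its domain T connected.
A new vertex x adjacent to T can be sent to the image of any z \<in> T that is adjacent to all
neighbours of x in T (if T is a single vertex, to any neighbour of its image). Such a z exists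
once T has two vertices. First, two neighbours a, b of x in T have a common neighbour in T:
along an induced a-b path in T, either x sees an inner vertex y, and common neighbours of a, y
and of y, b together with a, b, x, y span a 6-cycle with chord xy, which must have a further
chord; or x closes an induced cycle, which is then a square. Second, take z whose common
neighbours with x in T form an inclusion-maximal set. If z misses a neighbour a of x, let w be
a neighbour of a if z sees no neighbour of x, and otherwise a common neighbour of a and some
neighbour b of x seen by z. In the second case every neighbour c of x seen by z is seen by w,
for otherwise z, c, x, a, w, b would span a two-squares graph; either way w beats z.\<close>

lemma successively_take: "successively P xs \<Longrightarrow> successively P (take k xs)"
  by (simp add: successively_conv_nth)

lemma successively_drop: "successively P xs \<Longrightarrow> successively P (drop k xs)"
  by (simp add: successively_conv_nth)

lemma successively_shortcut:
  assumes "successively P xs" "i < j" "j < length xs" "P (xs ! i) (xs ! j)"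
  shows "successively P (take (Suc i) xs @ drop j xs)"
proof -
  have "last (take (Suc i) xs) = xs ! i"
    using assms(2,3) by (subst last_conv_nth) auto
  with assms show ?thesis
    by (auto simp: successively_append_iff successively_take successively_drop hd_drop_conv_nth)
qed

lemma rtranclp_on_imp_walk:
  assumes "(\<lambda>u v. u \<in> T \<and> v \<in> T \<and> E u v)\<^sup>*\<^sup>* a b" "a \<in> T"
  shows "\<exists>xs. successively E xs \<and> xs \<noteq> [] \<and> set xs \<subseteq> T \<and> hd xs = a \<and> last xs = b"
  using assms
proof (induction rule: rtranclp_induct)
  case base
  then show ?case by (intro exI[of _ "[a]"]) auto
next
  case (step y z)
  then obtain xs where "successively E xs" "xs \<noteq> []" "set xs \<subseteq> T" "hd xs = a" "last xs = y"
    by blast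
  with step.hyps(2) show ?case
    by (intro exI[of _ "xs @ [z]"]) (auto simp: successively_append_iff)
qed

lemma connected_on_has_neighbour:
  assumes "connected_on E T" "a \<in> T" "\<not> is_singleton T"
  obtains w where "w \<in> T" "E a w"
proof -
  obtain b where "b \<in> T" "b \<noteq> a"
    using assms(2,3) by (auto simp: is_singleton_def)
  then have "(\<lambda>u v. u \<in> T \<and> v \<in> T \<and> E u v)\<^sup>*\<^sup>* a b" "a \<noteq> b"
    using assms(1,2) unfolding connected_on_def by auto
  then show ?thesis
    by (cases rule: converse_rtranclpE) (auto intro: that)
qed

lemma connected_on_edge_leaving:
  assumes "connected_on E V" "T \<subseteq> V" "T \<noteq> {}" "T \<noteq> V"
  obtains t x where "t \<in> T" "x \<in> V - T" "E t x"
proof -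
  obtain t0 y where "t0 \<in> T" "y \<in> V - T"
    using assms(2-4) by blast
  then have "(\<lambda>u v. u \<in> V \<and> v \<in> V \<and> E u v)\<^sup>*\<^sup>* t0 y"
    using assms(1,2) unfolding connected_on_def by blast
  then have "y \<notin> T \<longrightarrow> (\<exists>t\<in>T. \<exists>x\<in>V - T. E t x)"
    by (induction rule: rtranclp_induct) (use \<open>t0 \<in> T\<close> in blast)+
  with \<open>y \<in> V - T\<close> that show ?thesis by blast
qed

definition induced_path :: "('a \<Rightarrow> 'a \<Rightarrow> bool) \<Rightarrow> 'a list \<Rightarrow> bool" where
  "induced_path E xs \<longleftrightarrow> successively E xs \<and> distinct xs \<and>
     (\<forall>i j. Suc i < j \<longrightarrow> j < length xs \<longrightarrow> \<not> E (xs ! i) (xs ! j))"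

lemma induced_path_take: "induced_path E xs \<Longrightarrow> induced_path E (take k xs)"
  by (auto simp: induced_path_def successively_take)

lemma induced_path_drop: "induced_path E xs \<Longrightarrow> induced_path E (drop k xs)"
  by (auto simp: induced_path_def successively_drop)

locale graph =
  fixes V :: "'a set" and E :: "'a \<Rightarrow> 'a \<Rightarrow> bool"
  assumes simple: "simple_graph V E"
begin

lemma sym: "E x y \<Longrightarrow> E y x"
  using simple unfolding simple_graph_def by blast

lemma irrefl: "\<not> E x x"
  using simple unfolding simple_graph_def by blast

lemma edge_in_V: "E x y \<Longrightarrow> x \<in> V"
  using simple unfolding simple_graph_def by blast

lemma induced_path_adj_iff:
  assumes "induced_path E xs" "k < length xs" "l < length xs"
  shows "E (xs ! k) (xs ! l) \<longleftrightarrow> l = Suc k \<or> k = Suc l"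
proof -
  have "\<not> E (xs ! k) (xs ! l)" if "Suc k < l \<or> Suc l < k"
    using that assms sym unfolding induced_path_def by blast
  moreover have "E (xs ! k) (xs ! l)" if "l = Suc k \<or> k = Suc l"
    using that assms sym successively_nth unfolding induced_path_def by blast
  ultimately show ?thesis
    using irrefl by (metis Suc_lessI linorder_neqE_nat)
qed

lemma walk_contains_induced_path:
  assumes "successively E xs" "xs \<noteq> []"
  shows "\<exists>ys. induced_path E ys \<and> ys \<noteq> [] \<and> set ys \<subseteq> set xs \<and>
    hd ys = hd xs \<and> last ys = last xs"
  using assms
proof (induction "length xs" arbitrary: xs rule: less_induct)
  case less
  have shorter: ?case
    if "successively E ys" "ys \<noteq> []" "set ys \<subseteq> set xs" "hd ys = hd xs" "last ys = last xs"
      "length ys < length xs" for ys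
    using less.hyps[OF that(6,1,2)] that(3-5) by auto
  have shortcut: ?case if "Suc i < j" "j < length xs" "E (xs ! i) (xs ! j)" for i j
  proof (rule shorter)
    show "successively E (take (Suc i) xs @ drop j xs)"
      using successively_shortcut[OF less.prems(1) _ that(2,3)] that(1) by simp
    show "set (take (Suc i) xs @ drop j xs) \<subseteq> set xs"
      using set_take_subset set_drop_subset by fastforce
  qed (use that in \<open>auto simp: hd_append\<close>)
  show ?case
  proof (cases "induced_path E xs")
    case True
    with less.prems show ?thesis by blast
  next
    case False
    then consider i j where "i < j" "j < length xs" "xs ! i = xs ! j"
      | i j where "Suc i < j" "j < length xs" "E (xs ! i) (xs ! j)"
      using less.prems(1) unfolding induced_path_def distinct_conv_nth
      by (metis linorder_neqE_nat)
    then show ?thesis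
    proof cases
      case (1 i j)
      show ?thesis
      proof (cases i)
        case 0
        with 1 less.prems show ?thesis
          by (intro shorter[of "drop j xs"])
            (auto simp: successively_drop hd_drop_conv_nth hd_conv_nth set_drop_subset)
      next
        case (Suc i')
        with 1 show ?thesis
          using successively_nth[OF less.prems(1), of i'] by (intro shortcut[of i' j]) auto
      qed
    next
      case (2 i j)
      then show ?thesis by (intro shortcut) auto
    qed
  qed
qed

lemma induced_cycle_Cons:
  assumes path: "induced_path E xs" and len: "2 \<le> length xs" and "x \<notin> set xs"
    and x_adj: "\<And>k. k < length xs \<Longrightarrow> E x (xs ! k) \<longleftrightarrow> k = 0 \<or> k = length xs - 1"
  shows "induced_cycle V E (x # xs)"
  unfolding induced_cycle_def
proof (intro conjI allI impI)
  let ?n = "length xs"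
  show "3 \<le> length (x # xs)" "distinct (x # xs)"
    using assms unfolding induced_path_def by auto
  have "xs ! k \<in> V" if "k < ?n" for k
  proof (cases "Suc k < ?n")
    case True
    then show ?thesis
      using path successively_nth edge_in_V unfolding induced_path_def by blast
  next
    case False
    with that x_adj[of k] show ?thesis
      using edge_in_V sym by fastforce
  qed
  moreover have "x \<in> V"
    using x_adj[of 0] len edge_in_V by (cases xs) auto
  ultimately show "set (x # xs) \<subseteq> V"
    by (auto simp: in_set_conv_nth)
  have Suc_mod: "Suc k mod Suc ?n = (if k = ?n then 0 else Suc k)" if "k \<le> ?n" for k
    using that by auto
  have adj_x: "E (xs ! k) x \<longleftrightarrow> k = 0 \<or> k = ?n - 1" if "k < ?n" for k
    using x_adj[OF that] sym by blast
  fix i j assume "i < length (x # xs)" "j < length (x # xs)"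
  then show "E ((x # xs) ! i) ((x # xs) ! j) \<longleftrightarrow>
      j = Suc i mod length (x # xs) \<or> i = Suc j mod length (x # xs)"
    using len by (cases i; cases j)
      (auto simp: Suc_mod x_adj adj_x induced_path_adj_iff[OF path] irrefl)
qed

lemma connected_on_insert:
  assumes "connected_on E T" "t \<in> T" "E t x"
  shows "connected_on E (insert x T)"
proof -
  let ?R = "\<lambda>u v. u \<in> T \<and> v \<in> T \<and> E u v"
  let ?R' = "\<lambda>u v. u \<in> insert x T \<and> v \<in> insert x T \<and> E u v"
  have "?R\<^sup>*\<^sup>* \<le> ?R'\<^sup>*\<^sup>*"
    by (rule rtranclp_mono) auto
  then have in_T: "?R'\<^sup>*\<^sup>* p q" if "p \<in> T" "q \<in> T" for p q
    using assms(1) that unfolding connected_on_def by blast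
  have "?R'\<^sup>*\<^sup>* p t" if "p \<in> insert x T" for p
    using that in_T[OF _ assms(2)] assms(2,3) sym by auto
  moreover have "?R'\<^sup>*\<^sup>* t q" if "q \<in> insert x T" for q
    using that in_T[OF assms(2)] assms(2,3) by auto
  ultimately show ?thesis
    unfolding connected_on_def by (meson insert_not_empty rtranclp_trans)
qed

lemma graph_hom_fun_upd:
  assumes "graph_hom T E V E g" "y \<in> V" "\<forall>a\<in>T. E x a \<longrightarrow> E y (g a)"
  shows "graph_hom (insert x T) E V E (g(x := y))"
  unfolding graph_hom_def
proof (intro conjI ballI impI)
  fix p q assume "p \<in> insert x T" "q \<in> insert x T" "E p q"
  with assms show "E ((g(x := y)) p) ((g(x := y)) q)"
    using irrefl sym unfolding graph_hom_def by (cases "p = x"; cases "q = x") auto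
qed (use assms in \<open>auto simp: graph_hom_def\<close>)

lemma graph_hom_extends_to_vertex:
  assumes "connected_on E V" "T \<subseteq> V" "graph_hom T E V E g" "x \<in> V - T"
    and dominated: "\<not> is_singleton T \<Longrightarrow> \<exists>z\<in>T. \<forall>a\<in>T. E x a \<longrightarrow> E z a"
  shows "\<exists>y\<in>V. \<forall>a\<in>T. E x a \<longrightarrow> E y (g a)"
proof (cases "is_singleton T")
  case True
  then obtain t where T: "T = {t}"
    by (auto simp: is_singleton_def)
  then have "\<not> is_singleton V" "g t \<in> V"
    using assms(2-4) unfolding graph_hom_def is_singleton_def by auto
  then obtain y where "y \<in> V" "E (g t) y"
    using connected_on_has_neighbour[OF assms(1)] by blast
  with T show ?thesis
    using sym by blast
next
  case False
  then obtain z where "z \<in> T" "\<forall>a\<in>T. E x a \<longrightarrow> E z a"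
    using dominated by blast
  with assms(3) show ?thesis
    unfolding graph_hom_def by blast
qed

lemma C_HH_if_neighbourhoods_dominated:
  assumes "finite V" "connected_on E V"
    and dominated: "\<And>T x. T \<subseteq> V \<Longrightarrow> connected_on E T \<Longrightarrow> \<not> is_singleton T \<Longrightarrow> x \<in> V - T \<Longrightarrow>
      \<exists>z\<in>T. \<forall>a\<in>T. E x a \<longrightarrow> E z a"
  shows "C_HH V E"
proof -
  have "\<exists>h. graph_hom V E V E h \<and> (\<forall>t\<in>T. h t = g t)"
    if "T \<subseteq> V" "connected_on E T" "graph_hom T E V E g" for T g
    using that
  proof (induction "card (V - T)" arbitrary: T g rule: less_induct)
    case less
    show ?case
    proof (cases "T = V")
      case True
      with less.prems show ?thesis by blast
    next
      case False
      moreover have "T \<noteq> {}"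
        using less.prems(2) unfolding connected_on_def by blast
      ultimately obtain t x where tx: "t \<in> T" "x \<in> V - T" "E t x"
        using connected_on_edge_leaving[OF assms(2) less.prems(1)] by blast
      then obtain y where "y \<in> V" "\<forall>a\<in>T. E x a \<longrightarrow> E y (g a)"
        using graph_hom_extends_to_vertex[OF assms(2) less.prems(1,3) tx(2)
            dominated[OF less.prems(1,2) _ tx(2)]] by blast
      then have "graph_hom (insert x T) E V E (g(x := y))"
        using graph_hom_fun_upd less.prems(3) by blast
      moreover have "connected_on E (insert x T)"
        using connected_on_insert less.prems(2) tx by blast
      moreover have "card (V - insert x T) < card (V - T)"
        using tx assms(1) by (intro psubset_card_mono) auto
      ultimately obtain h where "graph_hom V E V E h" "\<forall>p\<in>insert x T. h p = (g(x := y)) p"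
        using less.hyps less.prems(1) tx by (metis Diff_iff insert_subset)
      with tx show ?thesis by auto
    qed
  qed
  then show ?thesis
    unfolding C_HH_def by blast
qed

end

locale square_graph = graph +
  assumes induced_cycles_square: "\<forall>vs. induced_cycle V E vs \<longrightarrow> length vs = 4"
    and two_squares_free: "\<not> embeds {1..6::nat} two_squares_edge V E"
begin

lemma triangle_free: "E a b \<Longrightarrow> E b c \<Longrightarrow> \<not> E a c"
proof
  assume "E a b" "E b c" "E a c"
  then have "induced_path E [b, c]" "a \<notin> set [b, c]"
    using irrefl unfolding induced_path_def by auto
  moreover have "E a ([b, c] ! k) \<longleftrightarrow> k = 0 \<or> k = length [b, c] - 1" if "k < length [b, c]" for k
    using that \<open>E a b\<close> \<open>E a c\<close> by (auto simp: less_2_cases_iff)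
  ultimately have "induced_cycle V E [a, b, c]"
    by (intro induced_cycle_Cons) auto
  then show False
    using induced_cycles_square by fastforce
qed

lemma two_squares_chord:
  assumes "E u1 u2" "E u2 u3" "E u3 u4" "E u4 u5" "E u5 u6" "E u6 u1" "E u3 u6"
  shows "E u1 u4 \<or> E u2 u5"
proof (rule ccontr)
  assume no_chord: "\<not> (E u1 u4 \<or> E u2 u5)"
  have edges: "E u1 u2" "E u2 u3" "E u3 u4" "E u4 u5" "E u5 u6" "E u6 u1" "E u3 u6"
      "E u2 u1" "E u3 u2" "E u4 u3" "E u5 u4" "E u6 u5" "E u1 u6" "E u6 u3"
    using assms sym by auto
  have non_edges: "\<not> E u1 u3" "\<not> E u1 u4" "\<not> E u1 u5" "\<not> E u2 u4" "\<not> E u2 u5" "\<not> E u2 u6"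
      "\<not> E u3 u5" "\<not> E u4 u6" "\<not> E u3 u1" "\<not> E u4 u1" "\<not> E u5 u1" "\<not> E u4 u2" "\<not> E u5 u2"
      "\<not> E u6 u2" "\<not> E u5 u3" "\<not> E u6 u4"
      "\<not> E u1 u1" "\<not> E u2 u2" "\<not> E u3 u3" "\<not> E u4 u4" "\<not> E u5 u5" "\<not> E u6 u6"
    using no_chord edges triangle_free irrefl sym by meson+
  then have distinct: "distinct [u1, u2, u3, u4, u5, u6]"
    using edges by auto
  define g where "g i = [u1, u2, u3, u4, u5, u6] ! (i - 1)" for i :: nat
  have six: "{1..6::nat} = {1, 2, 3, 4, 5, 6}"
    by auto
  have "embeds {1..6::nat} two_squares_edge V E"
    unfolding embeds_def
  proof (intro exI conjI)
    show "inj_on g {1..6}"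
      using distinct unfolding six g_def inj_on_def by auto
    show "g ` {1..6} \<subseteq> V"
      using edges edge_in_V unfolding six g_def by auto
    show "\<forall>i\<in>{1..6}. \<forall>j\<in>{1..6}. E (g i) (g j) = two_squares_edge i j"
      unfolding six g_def two_squares_edge_def using edges non_edges by (auto simp: doubleton_eq_iff)
  qed
  with two_squares_free show False ..
qed

lemma common_neighbour_of_induced_path:
  assumes "induced_path E xs" "2 \<le> length xs" "x \<notin> set xs" "E x (hd xs)" "E x (last xs)"
  shows "\<exists>z\<in>set xs. E z (hd xs) \<and> E z (last xs)"
  using assms
proof (induction "length xs" arbitrary: xs rule: less_induct)
  case less
  let ?n = "length xs"
  have ne: "xs \<noteq> []"
    using less.prems(2) by auto
  then have hd: "hd xs = xs ! 0" and last: "last xs = xs ! (?n - 1)"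
    by (simp_all add: hd_conv_nth last_conv_nth)
  have dist: "distinct xs"
    using less.prems(1) unfolding induced_path_def by blast
  show ?case
  proof (cases "\<exists>i. 0 < i \<and> i < ?n - 1 \<and> E x (xs ! i)")
    case True
    then obtain i where i: "0 < i" "i < ?n - 1" "E x (xs ! i)"
      by blast
    let ?y = "xs ! i"
    have y: "?y \<noteq> hd xs" "?y \<noteq> last xs"
      using i ne by (simp_all add: hd last nth_eq_iff_index_eq[OF dist])
    have "last (take (Suc i) xs) = ?y"
      using i by (subst last_conv_nth) auto
    then obtain u where u: "u \<in> set xs" "E u (hd xs)" "E u ?y"
      using less.hyps[of "take (Suc i) xs"] less.prems i y
        induced_path_take set_take_subset[of "Suc i" xs]
      by (fastforce dest: in_set_takeD)
    have "hd (drop i xs) = ?y"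
      using i by (simp add: hd_drop_conv_nth)
    then obtain u' where u': "u' \<in> set xs" "E u' ?y" "E u' (last xs)"
      using less.hyps[of "drop i xs"] less.prems i y induced_path_drop
      by (fastforce dest: in_set_dropD)
    have "E u' (hd xs) \<or> E (last xs) u"
      using two_squares_chord[of u' "last xs" x "hd xs" u ?y] u u' i less.prems sym by blast
    with u u' show ?thesis
      using sym by blast
  next
    case False
    have "induced_cycle V E (x # xs)"
    proof (rule induced_cycle_Cons)
      show "E x (xs ! k) \<longleftrightarrow> k = 0 \<or> k = ?n - 1" if "k < ?n" for k
        using False that less.prems(4,5) hd last by (auto simp: not_less_eq)
    qed (use less.prems in auto)
    then have "?n = 3"
      using induced_cycles_square by fastforce
    then show ?thesis
      using induced_path_adj_iff[OF less.prems(1), of 1] hd last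
      by (intro bexI[of _ "xs ! 1"]) auto
  qed
qed

lemma common_neighbour_in_connected:
  assumes "connected_on E T" "a \<in> T" "b \<in> T" "a \<noteq> b" "x \<notin> T" "E x a" "E x b"
  shows "\<exists>z\<in>T. E z a \<and> E z b"
proof -
  have "(\<lambda>u v. u \<in> T \<and> v \<in> T \<and> E u v)\<^sup>*\<^sup>* a b"
    using assms(1-3) unfolding connected_on_def by blast
  then obtain xs where "successively E xs" "xs \<noteq> []" "set xs \<subseteq> T" "hd xs = a" "last xs = b"
    using rtranclp_on_imp_walk[OF _ assms(2)] by blast
  then obtain ys where ys: "induced_path E ys" "ys \<noteq> []" "set ys \<subseteq> T" "hd ys = a" "last ys = b"
    using walk_contains_induced_path by blast
  then have "2 \<le> length ys"
    using \<open>a \<noteq> b\<close> by (cases ys rule: remdups_adj.cases) auto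
  with ys assms(5-7) show ?thesis
    using common_neighbour_of_induced_path[of ys x] by blast
qed

lemma neighbourhood_dominated:
  assumes "finite T" "connected_on E T" "\<not> is_singleton T" "x \<notin> T"
  shows "\<exists>z\<in>T. \<forall>a\<in>T. E x a \<longrightarrow> E z a"
proof -
  define N where "N z = {a \<in> T. E x a \<and> E z a}" for z
  have "\<exists>M\<in>N ` T. \<forall>M'\<in>N ` T. M \<subseteq> M' \<longrightarrow> M = M'"
    using assms(1,2) unfolding connected_on_def by (intro finite_has_maximal) auto
  then obtain z where z: "z \<in> T" and maximal: "\<And>w. w \<in> T \<Longrightarrow> N z \<subseteq> N w \<Longrightarrow> N z = N w"
    by auto
  have "E z a" if a: "a \<in> T" "E x a" for a
  proof (rule ccontr)
    assume "\<not> E z a"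
    then have "a \<notin> N z"
      unfolding N_def by blast
    moreover have "\<exists>w\<in>T. N z \<subseteq> N w \<and> a \<in> N w"
    proof (cases "N z = {}")
      case True
      obtain w where "w \<in> T" "E a w"
        using connected_on_has_neighbour[OF assms(2) a(1) assms(3)] .
      with a True show ?thesis
        unfolding N_def using sym by auto
    next
      case False
      then obtain b where b: "b \<in> T" "E x b" "E z b"
        unfolding N_def by blast
      with \<open>\<not> E z a\<close> have "a \<noteq> b"
        by blast
      then obtain w where w: "w \<in> T" "E w a" "E w b"
        using common_neighbour_in_connected[OF assms(2) a(1) b(1) _ assms(4) a(2) b(2)] by blast
      have "E w c" if "c \<in> N z" for c
      proof -
        from that have "E z c" "E c x"
          unfolding N_def using sym by auto
        then have "E z a \<or> E c w"
          using two_squares_chord[of z c x a w b] a b w sym[of w a] sym[of z b] by blast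
        with \<open>\<not> E z a\<close> show ?thesis
          using sym by blast
      qed
      with w a show ?thesis
        unfolding N_def by auto
    qed
    ultimately show False
      using maximal by blast
  qed
  with z show ?thesis
    by blast
qed

end

theorem lemma5p2:
  fixes V :: "'a set" and E :: "'a \<Rightarrow> 'a \<Rightarrow> bool"
  assumes "simple_graph V E"
    and "finite V"
    and "connected_on E V"
    and "\<forall>vs. induced_cycle V E vs \<longrightarrow> length vs = 4"
    and "\<not> embeds {1..6::nat} two_squares_edge V E"
  shows "C_HH V E"
proof -
  interpret square_graph V E
    using assms(1,4,5) by unfold_locales
  show ?thesis
  proof (rule C_HH_if_neighbourhoods_dominated[OF assms(2,3)])
    fix T x
    assume "T \<subseteq> V" "connected_on E T" "\<not> is_singleton T" "x \<in> V - T"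
    then show "\<exists>z\<in>T. \<forall>a\<in>T. E x a \<longrightarrow> E z a"
      using neighbourhood_dominated finite_subset[OF _ assms(2)] by blast
  qed
qed

end
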